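(* Let $S$ be a $d\times d$ symmetric positive semidefinite matrix and $L,U$ symmetric matrices with entries in $\mathbb{R}\cup\{\pm\infty\}$, $L_{ij}\le0\le U_{ij}$ for $i\ne j$ and $L_{ii}=U_{ii}=0$. Let $\widehat K$ be the optimal solution of minimizing $-\log\det K+\operatorname{tr}(SK)+\sum_{i\neq j}\max\{L_{ij}K_{ij},U_{ij}K_{ij}\}$ over positive definite $K$ (convention $\pm\infty\cdot0=0$). For $i\ne j$: if $L_{ij}\le-S_{ij}-\sqrt{S_{ii}S_{jj}}$ then $\widehat K_{ij}\ge0$; if $U_{ij}\ge-S_{ij}+\sqrt{S_{ii}S_{jj}}$ then $\widehat K_{ij}\le0$. In particular, $\widehat K_{ij}=0$ if both conditions hold. *)

theory Defs
  imports "HOL-Analysis.Analysis"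
begin

definition sym_mat :: "real^'n^'n \<Rightarrow> bool" where
  "sym_mat A \<longleftrightarrow> transpose A = A"

definition psd_mat :: "real^'n^'n \<Rightarrow> bool" where
  "psd_mat A \<longleftrightarrow> sym_mat A \<and> (\<forall>x. x \<bullet> (A *v x) \<ge> 0)"

definition pd_mat :: "real^'n^'n \<Rightarrow> bool" where
  "pd_mat A \<longleftrightarrow> sym_mat A \<and> (\<forall>x. x \<noteq> 0 \<longrightarrow> x \<bullet> (A *v x) > 0)"

(* Objective -log det K + tr(SK) + sum_{i<>j} max{L_ij K_ij, U_ij K_ij},
   valued in ereal; in ereal, 0 * (+-\<infinity>) = 0, matching the convention. *)
definition penalized_obj ::
  "real^'n^'n \<Rightarrow> ('n \<Rightarrow> 'n \<Rightarrow> ereal) \<Rightarrow> ('n \<Rightarrow> 'n \<Rightarrow> ereal) \<Rightarrow> real^'n^'n \<Rightarrow> ereal" where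
  "penalized_obj S L U K =
     ereal (- ln (det K) + trace (S ** K)) +
     (\<Sum>(i,j)\<in>{(i,j). i \<noteq> j}. max (L i j * ereal (K $ i $ j)) (U i j * ereal (K $ i $ j)))"

end

theory Submission
  imports Defs
begin

(* Let m be the slope of the penalty at the entry Khat_ij != 0, i.e. L_ij if Khat_ij < 0 and U_ij
   if Khat_ij > 0; it is finite because the minimum is finite. For v supported on {i, j} and small
   t > 0, Khat + t v v^T is still positive definite and its (i, j) entry keeps its sign, so by the
   matrix determinant lemma the objective changes by
     - ln (1 + t v^T Khat^-1 v) + t (v^T S v + 2 m v_i v_j).
   Minimality and ln (1 + x) >= x - x^2 give v^T Khat^-1 v <= v^T S v + 2 m v_i v_j. Hence the
   2x2 matrix with diagonal S_ii, S_jj and off-diagonal S_ij + m is positive definite, that is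
   |S_ij + m| < sqrt (S_ii S_jj), which is incompatible with L_ij <= - S_ij - sqrt (S_ii S_jj)
   when Khat_ij < 0 and with U_ij >= - S_ij + sqrt (S_ii S_jj) when Khat_ij > 0. *)

definition outer :: "'a::times^'n \<Rightarrow> 'a^'m \<Rightarrow> 'a^'m^'n" where
  "outer u v = (\<chi> p q. u$p * v$q)"

lemma outer_mult_vec:
  fixes u v x :: "real^'n"
  shows "outer u v *v x = (v \<bullet> x) *\<^sub>R u"
  by (simp add: outer_def vec_eq_iff matrix_vector_mult_def inner_vec_def sum_distrib_left
      mult.commute mult.left_commute)

lemma trace_mult_outer: "trace (A ** outer u v) = v \<bullet> (A *v u)"
  by (simp add: trace_def outer_def matrix_matrix_mult_def matrix_vector_mult_def inner_vec_def
      sum_distrib_left algebra_simps)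

lemma det_add_multiples_to_rows:
  fixes A :: "'a::comm_ring_1^'n^'n"
  shows "det (\<chi> p. if p \<in> R then A$p + c p *s v else A$p)
    = det A + (\<Sum>p\<in>R. c p * det (\<chi> r. if r = p then v else A$r))"
  using finite[of R]
proof (induction R arbitrary: A)
  case empty
  then show ?case by (simp add: vec_eq_iff)
next
  case (insert p R)
  define B where "B = (\<chi> r. if r = p then A$p + c p *s v else A$r)"
  have "(\<chi> r. if r \<in> insert p R then A$r + c r *s v else A$r)
      = (\<chi> r. if r \<in> R then B$r + c r *s v else B$r)"
    using insert.hyps(2) by (auto simp: B_def vec_eq_iff)
  moreover have "det B = det A + c p * det (\<chi> r. if r = p then v else A$r)"
  proof -
    have "(\<chi> r. if r = p then A$p else A$r) = A" by (simp add: vec_eq_iff)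
    then show ?thesis unfolding B_def det_row_add[of p] det_row_mul[of p] by simp
  qed
  moreover have "det (\<chi> s. if s = r then v else B$s) = det (\<chi> s. if s = r then v else A$s)"
    if "r \<in> R" for r
  proof -
    let ?C = "\<chi> s. if s = r then v else A$s"
    have "r \<noteq> p" using that insert.hyps(2) by auto
    have "(\<chi> s. if s = r then v else B$s) = (\<chi> s. if s = p then row p ?C + c p *s row r ?C else row s ?C)"
      using \<open>r \<noteq> p\<close> by (auto simp: B_def row_def vec_eq_iff)
    then show ?thesis using det_row_operation[OF \<open>r \<noteq> p\<close>[symmetric]] by simp
  qed
  ultimately show ?case
    using insert.IH insert.hyps by (simp add: algebra_simps)
qed

lemma det_row_replace_transpose_mult:
  fixes A :: "'a::field^'n^'n"
  shows "det (\<chi> r. if r = k then transpose A *v x else A$r) = x$k * det A"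
proof -
  have "(\<chi> r. if r = k then transpose A *v x else A$r)
      = transpose (\<chi> r c. if c = k then (transpose A *v x)$r else transpose A$r$c)"
    by (simp add: vec_eq_iff transpose_def)
  then show ?thesis using cramer_lemma[of k "transpose A" x] by simp
qed

text \<open>The matrix determinant lemma \<open>det (A + u v\<^sup>T) = det A (1 + v\<^sup>T A\<^sup>-\<^sup>1 u)\<close>; the solution \<open>x\<close>
  stands for \<open>A\<^sup>-\<^sup>T v\<close>, so \<open>A\<close> need not be invertible.\<close>
lemma det_add_outer:
  fixes A :: "real^'n^'n"
  assumes "transpose A *v x = v"
  shows "det (A + outer u v) = det A * (1 + u \<bullet> x)"
proof -
  have "A + outer u v = (\<chi> p. if p \<in> UNIV then A$p + u$p *s v else A$p)"
    by (simp add: outer_def vec_eq_iff)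
  moreover have "det (\<chi> r. if r = p then v else A$r) = x$p * det A" for p
    using det_row_replace_transpose_mult[of p A x] unfolding assms .
  ultimately have "det (A + outer u v) = det A + (\<Sum>p\<in>UNIV. u$p * (x$p * det A))"
    using det_add_multiples_to_rows[of UNIV A "\<lambda>p. u$p" v] by simp
  then show ?thesis by (simp add: inner_vec_def sum_distrib_left algebra_simps)
qed

lemma sym_mat_iff_entries: "sym_mat A \<longleftrightarrow> (\<forall>i j. A$i$j = A$j$i)"
  unfolding sym_mat_def transpose_def vec_eq_iff by auto

lemma pd_mat_mat_1: "pd_mat (mat 1)"
proof -
  have "sym_mat (mat 1 :: real^'n^'n)" by (simp add: sym_mat_iff_entries mat_def)
  then show ?thesis by (simp add: pd_mat_def)
qed

lemma pd_mat_convex_combination: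
  fixes A B :: "real^'n^'n"
  assumes "pd_mat A" "pd_mat B" "0 \<le> s" "s \<le> 1"
  shows "pd_mat (s *\<^sub>R A + (1 - s) *\<^sub>R B)"
  unfolding pd_mat_def
proof safe
  show "sym_mat (s *\<^sub>R A + (1 - s) *\<^sub>R B)"
    using assms(1,2) by (simp add: pd_mat_def sym_mat_iff_entries)
next
  fix x :: "real^'n" assume "x \<noteq> 0"
  then have "0 < x \<bullet> (A *v x)" "0 < x \<bullet> (B *v x)"
    using assms(1,2) by (auto simp: pd_mat_def)
  moreover have "x \<bullet> ((s *\<^sub>R A + (1 - s) *\<^sub>R B) *v x)
      = s * (x \<bullet> (A *v x)) + (1 - s) * (x \<bullet> (B *v x))"
    by (simp add: matrix_vector_mult_add_rdistrib scaleR_matrix_vector_assoc[symmetric] inner_add_right)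
  ultimately show "0 < x \<bullet> ((s *\<^sub>R A + (1 - s) *\<^sub>R B) *v x)"
    using assms(3,4) by (smt (verit) mult_nonneg_nonneg mult_pos_pos)
qed

lemma pd_mat_add_outer_self:
  fixes K :: "real^'n^'n"
  assumes "pd_mat K" "0 \<le> t"
  shows "pd_mat (K + outer (t *\<^sub>R v) v)"
  unfolding pd_mat_def
proof safe
  show "sym_mat (K + outer (t *\<^sub>R v) v)"
    using assms(1) by (simp add: pd_mat_def sym_mat_iff_entries outer_def mult.commute)
next
  fix x :: "real^'n" assume "x \<noteq> 0"
  have "x \<bullet> ((K + outer (t *\<^sub>R v) v) *v x) = x \<bullet> (K *v x) + t * (v \<bullet> x)\<^sup>2"
    by (simp add: matrix_vector_mult_add_rdistrib outer_mult_vec inner_add_right inner_commute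
        power2_eq_square)
  then show "0 < x \<bullet> ((K + outer (t *\<^sub>R v) v) *v x)"
    using assms \<open>x \<noteq> 0\<close> by (simp add: pd_mat_def add_pos_nonneg)
qed

lemma pd_mat_invertible:
  assumes "pd_mat K"
  shows "invertible K"
  unfolding invertible_left_inverse matrix_left_invertible_ker
  using assms unfolding pd_mat_def by (metis inner_zero_right less_irrefl)

lemma pd_mat_det_pos:
  fixes K :: "real^'n^'n"
  assumes K: "pd_mat K"
  shows "0 < det K"
proof (rule ccontr)
  define f where "f s = det (s *\<^sub>R K + (1 - s) *\<^sub>R mat 1)" for s :: real
  assume "\<not> 0 < det K"
  moreover have "det K \<noteq> 0" using pd_mat_invertible[OF K] invertible_det_nz by blast
  ultimately have "f 1 < 0" by (simp add: f_def)
  moreover have "f 0 = 1" by (simp add: f_def)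
  moreover have "continuous_on {0..1} f"
    unfolding f_def det_def by (intro continuous_intros)
  ultimately obtain s where "0 \<le> s" "s \<le> 1" "f s = 0"
    using IVT2'[of f 1 0 0] by auto
  then show False
    using pd_mat_convex_combination[OF K pd_mat_mat_1] pd_mat_invertible invertible_det_nz
    unfolding f_def by blast
qed

lemma pd_mat_solvable:
  assumes "pd_mat K"
  obtains w where "K *v w = v"
proof -
  obtain B where "K ** B = mat 1"
    using pd_mat_invertible[OF assms] invertible_right_inverse by blast
  then have "K *v (B *v v) = v" by (metis matrix_vector_mul_assoc matrix_vector_mul_lid)
  then show ?thesis using that by blast
qed

lemma pd_mat_inner_solution_pos:
  assumes "pd_mat K" "K *v w = v" "v \<noteq> 0"
  shows "0 < v \<bullet> w"
proof -
  have "w \<noteq> 0" using assms(2,3) by auto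
  moreover have "v \<bullet> w = w \<bullet> (K *v w)" using assms(2) by (simp add: inner_commute)
  ultimately show ?thesis using assms(1) unfolding pd_mat_def by simp
qed

lemma ln_one_plus_le_linear_imp_le:
  fixes q c \<delta> :: real
  assumes "0 < \<delta>" "0 \<le> q" and le: "\<And>t. 0 < t \<Longrightarrow> t < \<delta> \<Longrightarrow> ln (1 + t * q) \<le> t * c"
  shows "q \<le> c"
proof (rule ccontr)
  assume "\<not> q \<le> c"
  define t where "t = min (\<delta> / 2) (min (1 / (q + 1)) ((q - c) / (2 * (q\<^sup>2 + 1))))"
  have "0 < (q - c) / (2 * (q\<^sup>2 + 1))"
    using \<open>\<not> q \<le> c\<close> by (intro divide_pos_pos) (auto intro: add_nonneg_pos)
  then have t: "0 < t" "t < \<delta>" using assms by (auto simp: t_def)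
  have "t * q \<le> 1 / (q + 1) * q"
    using \<open>0 \<le> q\<close> by (intro mult_right_mono) (auto simp: t_def)
  also have "\<dots> \<le> 1" using \<open>0 \<le> q\<close> by (simp add: field_simps)
  finally have "t * q \<le> 1" .
  then have "t * q - (t * q)\<^sup>2 \<le> ln (1 + t * q)"
    using ln_one_plus_pos_lower_bound t(1) \<open>0 \<le> q\<close> by simp
  then have "t * (q - t * q\<^sup>2) \<le> t * c"
    using le[OF t] by (simp add: algebra_simps power2_eq_square)
  then have "q - t * q\<^sup>2 \<le> c" using t(1) by simp
  moreover have "t * (2 * (q\<^sup>2 + 1)) \<le> q - c"
  proof -
    have "0 < 2 * (q\<^sup>2 + 1)" by (simp add: add_nonneg_pos)
    moreover have "t \<le> (q - c) / (2 * (q\<^sup>2 + 1))" by (simp add: t_def)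
    ultimately show ?thesis by (simp add: pos_le_divide_eq)
  qed
  then have "2 * (t * q\<^sup>2) + 2 * t \<le> q - c" by (simp add: algebra_simps)
  ultimately show False using \<open>\<not> q \<le> c\<close> t(1) by linarith
qed

lemma quadratic_form_pos_imp_sq_less:
  fixes p q r :: real
  assumes "\<And>a b. (a, b) \<noteq> (0, 0) \<Longrightarrow> 0 < p * a\<^sup>2 + 2 * r * a * b + q * b\<^sup>2"
  shows "r\<^sup>2 < p * q"
proof -
  have "0 < p" using assms[of 1 0] by simp
  moreover have "0 < p * (- r)\<^sup>2 + 2 * r * (- r) * p + q * p\<^sup>2"
    using assms[of "- r" p] \<open>0 < p\<close> by simp
  then have "0 < p * (p * q - r\<^sup>2)" by (simp add: power2_eq_square algebra_simps)
  ultimately show ?thesis by (simp add: zero_less_mult_iff)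
qed

lemma max_mult_ereal_nonneg:
  fixes l u :: ereal
  assumes "l \<le> 0" "0 \<le> u"
  shows "0 \<le> max (l * ereal x) (u * ereal x)"
proof (cases "0 \<le> x")
  case True
  then have "0 \<le> u * ereal x" using assms by (simp add: ereal_zero_le_0_iff)
  then show ?thesis by (simp add: le_max_iff_disj)
next
  case False
  then have "0 \<le> l * ereal x" using assms by (simp add: ereal_zero_le_0_iff)
  then show ?thesis by (simp add: le_max_iff_disj)
qed

lemma max_mult_ereal_neg:
  fixes l u :: ereal
  assumes "l \<le> 0" "0 \<le> u" "x < 0"
  shows "max (l * ereal x) (u * ereal x) = l * ereal x"
proof -
  have "u * ereal x \<le> 0" using assms by (simp add: ereal_mult_le_0_iff)
  moreover have "0 \<le> l * ereal x" using assms by (simp add: ereal_zero_le_0_iff)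
  ultimately show ?thesis by (simp add: max_absorb1)
qed

lemma max_mult_ereal_pos:
  fixes l u :: ereal
  assumes "l \<le> 0" "0 \<le> u" "0 < x"
  shows "max (l * ereal x) (u * ereal x) = u * ereal x"
proof -
  have "l * ereal x \<le> 0" using assms by (simp add: ereal_mult_le_0_iff)
  moreover have "0 \<le> u * ereal x" using assms by (simp add: ereal_zero_le_0_iff)
  ultimately show ?thesis by (simp add: max_absorb2)
qed

lemma penalized_obj_update_pair:
  fixes S X Y :: "real^'n^'n"
  assumes "i \<noteq> j" "L i j = L j i" "U i j = U j i" "sym_mat X" "sym_mat Y"
    and same: "\<And>p q. p \<noteq> q \<Longrightarrow> (p, q) \<notin> {(i, j), (j, i)} \<Longrightarrow> Y$p$q = X$p$q"
    and X_pen: "max (L i j * ereal (X$i$j)) (U i j * ereal (X$i$j)) = ereal \<alpha>"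
    and Y_pen: "max (L i j * ereal (Y$i$j)) (U i j * ereal (Y$i$j)) = ereal \<beta>"
  shows "penalized_obj S L U Y = penalized_obj S L U X
    + ereal (ln (det X) - ln (det Y) + trace (S ** Y) - trace (S ** X) + 2 * (\<beta> - \<alpha>))"
proof -
  define G where "G Z = (\<lambda>(p, q). max (L p q * ereal (Z$p$q)) (U p q * ereal (Z$p$q)))"
    for Z :: "real^'n^'n"
  define Off where "Off = {(p, q). p \<noteq> (q::'n)}"
  define Rest where "Rest = Off - {(i, j)} - {(j, i)}"
  have split: "sum (G Z) Off = G Z (i, j) + (G Z (j, i) + sum (G Z) Rest)" for Z
  proof -
    have "(i, j) \<in> Off" "(j, i) \<in> Off - {(i, j)}" using assms(1) by (auto simp: Off_def)
    then show ?thesis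
      unfolding Rest_def by (simp add: sum.remove[of Off "(i, j)"] sum.remove[of "Off - {(i, j)}" "(j, i)"])
  qed
  have GY: "G Y (i, j) = ereal \<beta>" "G Y (j, i) = ereal \<beta>"
    and GX: "G X (i, j) = ereal \<alpha>" "G X (j, i) = ereal \<alpha>"
    using assms(2-5) X_pen Y_pen by (simp_all add: G_def sym_mat_iff_entries)
  have rest: "sum (G Y) Rest = sum (G X) Rest"
  proof (rule sum.cong[OF refl])
    fix pq assume "pq \<in> Rest"
    then obtain p q where "pq = (p, q)" "p \<noteq> q" "(p, q) \<notin> {(i, j), (j, i)}"
      by (auto simp: Rest_def Off_def)
    then show "G Y pq = G X pq" by (simp add: G_def same)
  qed
  have obj: "penalized_obj S L U Z = ereal (- ln (det Z) + trace (S ** Z)) + sum (G Z) Off" for Z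
    unfolding penalized_obj_def G_def Off_def ..
  show ?thesis
    unfolding obj split GY GX rest
    by (cases "sum (G X) Rest") (simp_all add: algebra_simps)
qed

lemma penalized_obj_add_outer:
  fixes S K :: "real^'n^'n"
  assumes "i \<noteq> j" "L i j = L j i" "U i j = U j i" "pd_mat K" "0 \<le> t"
    and supp: "\<And>p. p \<noteq> i \<Longrightarrow> p \<noteq> j \<Longrightarrow> v$p = 0"
    and w: "K *v w = v"
    and K_pen: "max (L i j * ereal (K$i$j)) (U i j * ereal (K$i$j)) = ereal \<alpha>"
    and M_pen: "max (L i j * ereal (K$i$j + t * (v$i * v$j))) (U i j * ereal (K$i$j + t * (v$i * v$j)))
      = ereal \<beta>"
  shows "penalized_obj S L U (K + outer (t *\<^sub>R v) v) = penalized_obj S L U K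
    + ereal (- ln (1 + t * (v \<bullet> w)) + t * (v \<bullet> (S *v v)) + 2 * (\<beta> - \<alpha>))"
proof -
  let ?M = "K + outer (t *\<^sub>R v) v"
  have K_sym: "sym_mat K" using assms(4) by (simp add: pd_mat_def)
  have M_sym: "sym_mat ?M" using pd_mat_add_outer_self[OF assms(4,5)] by (simp add: pd_mat_def)
  have M_ij: "?M$i$j = K$i$j + t * (v$i * v$j)" by (simp add: outer_def)
  have M_off: "?M$p$q = K$p$q" if "p \<noteq> q" "(p, q) \<notin> {(i, j), (j, i)}" for p q
    using that supp by (cases "p = i \<or> p = j"; cases "q = i \<or> q = j") (auto simp: outer_def)
  have "penalized_obj S L U ?M = penalized_obj S L U K
      + ereal (ln (det K) - ln (det ?M) + trace (S ** ?M) - trace (S ** K) + 2 * (\<beta> - \<alpha>))"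
    using M_pen unfolding M_ij[symmetric]
    by (intro penalized_obj_update_pair[OF assms(1-3) K_sym M_sym M_off K_pen])
  moreover have "ln (det ?M) = ln (det K) + ln (1 + t * (v \<bullet> w))"
  proof -
    have "transpose K *v w = v" using w K_sym by (simp add: sym_mat_def)
    then have "det ?M = det K * (1 + t * (v \<bullet> w))" using det_add_outer[of K w v "t *\<^sub>R v"] by simp
    moreover have "0 \<le> v \<bullet> w"
      using pd_mat_inner_solution_pos[OF assms(4) w] by (cases "v = 0") auto
    then have "0 < 1 + t * (v \<bullet> w)" using assms(5) by (simp add: add_pos_nonneg)
    ultimately show ?thesis using pd_mat_det_pos[OF assms(4)] by (simp add: ln_mult)
  qed
  moreover have "trace (S ** ?M) = trace (S ** K) + t * (v \<bullet> (S *v v))"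
    by (simp add: matrix_add_ldistrib trace_add trace_mult_outer matrix_vector_mult_scaleR)
  ultimately show ?thesis by (simp add: algebra_simps)
qed

locale penalized_minimizer =
  fixes S K :: "real^'n^'n" and L U :: "'n \<Rightarrow> 'n \<Rightarrow> ereal"
  assumes S_sym: "sym_mat S"
    and L_sym: "\<And>i j. L i j = L j i"
    and U_sym: "\<And>i j. U i j = U j i"
    and L_nonpos: "\<And>i j. i \<noteq> j \<Longrightarrow> L i j \<le> 0"
    and U_nonneg: "\<And>i j. i \<noteq> j \<Longrightarrow> 0 \<le> U i j"
    and K_pd: "pd_mat K"
    and K_min: "\<And>K'. pd_mat K' \<Longrightarrow> penalized_obj S L U K \<le> penalized_obj S L U K'"
begin

lemma penalty_nonneg:
  "0 \<le> (\<Sum>(p, q)\<in>{(p, q). p \<noteq> q}. max (L p q * ereal (X$p$q)) (U p q * ereal (X$p$q)))"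
  by (intro sum_nonneg) (auto intro: max_mult_ereal_nonneg L_nonpos U_nonneg)

lemma penalized_obj_min_finite: "\<bar>penalized_obj S L U K\<bar> \<noteq> \<infinity>"
proof -
  have "penalized_obj S L U (mat 1) \<noteq> \<infinity>"
    unfolding penalized_obj_def by (subst sum.neutral) (auto simp: mat_def zero_ereal_def[symmetric])
  then have "penalized_obj S L U K \<noteq> \<infinity>"
    using K_min[OF pd_mat_mat_1] by auto
  moreover have "penalized_obj S L U K \<noteq> - \<infinity>"
    using penalty_nonneg[of K] unfolding penalized_obj_def by auto
  ultimately show ?thesis by auto
qed

lemma penalty_min_finite:
  assumes "i \<noteq> j"
  shows "max (L i j * ereal (K$i$j)) (U i j * ereal (K$i$j)) \<noteq> \<infinity>"
proof
  assume "max (L i j * ereal (K$i$j)) (U i j * ereal (K$i$j)) = \<infinity>"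
  then have "(\<Sum>(p, q)\<in>{(p, q). p \<noteq> q}. max (L p q * ereal (K$p$q)) (U p q * ereal (K$p$q))) = \<infinity>"
    using assms by (subst sum_Pinfty) auto
  then show False using penalized_obj_min_finite unfolding penalized_obj_def by simp
qed

lemma first_order_rank_one:
  assumes ij: "i \<noteq> j" and "K$i$j \<noteq> 0"
    and slope: "\<And>x. 0 < x * K$i$j \<Longrightarrow> max (L i j * ereal x) (U i j * ereal x) = ereal (m * x)"
    and supp: "\<And>p. p \<noteq> i \<Longrightarrow> p \<noteq> j \<Longrightarrow> v$p = 0"
    and w: "K *v w = v"
  shows "v \<bullet> w \<le> v \<bullet> (S *v v) + 2 * m * (v$i * v$j)"
proof (rule ln_one_plus_le_linear_imp_le)
  define \<delta> where "\<delta> = \<bar>K$i$j\<bar> / (\<bar>v$i * v$j\<bar> + 1)"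
  show "0 < \<delta>" using \<open>K$i$j \<noteq> 0\<close> by (simp add: \<delta>_def add_nonneg_pos)
  show "0 \<le> v \<bullet> w"
    using pd_mat_inner_solution_pos[OF K_pd w] by (cases "v = 0") auto
  fix t :: real assume "0 < t" "t < \<delta>"
  have "\<bar>t * (v$i * v$j)\<bar> \<le> t * (\<bar>v$i * v$j\<bar> + 1)"
    using \<open>0 < t\<close> by (simp add: abs_mult)
  also have "\<dots> < \<bar>K$i$j\<bar>"
    using \<open>t < \<delta>\<close> by (simp add: \<delta>_def pos_less_divide_eq add_nonneg_pos)
  finally have "0 < (K$i$j + t * (v$i * v$j)) * K$i$j"
    by (smt (verit, best) abs_mult_pos mult_less_0_iff zero_less_mult_iff)
  then have "max (L i j * ereal (K$i$j + t * (v$i * v$j))) (U i j * ereal (K$i$j + t * (v$i * v$j)))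
      = ereal (m * (K$i$j + t * (v$i * v$j)))"
    by (rule slope)
  moreover have "max (L i j * ereal (K$i$j)) (U i j * ereal (K$i$j)) = ereal (m * K$i$j)"
    using \<open>K$i$j \<noteq> 0\<close> not_real_square_gt_zero slope by blast
  ultimately have "penalized_obj S L U (K + outer (t *\<^sub>R v) v) = penalized_obj S L U K
      + ereal (- ln (1 + t * (v \<bullet> w)) + t * (v \<bullet> (S *v v))
               + 2 * (m * (K$i$j + t * (v$i * v$j)) - m * K$i$j))"
    using \<open>0 < t\<close> by (intro penalized_obj_add_outer[OF ij L_sym U_sym K_pd _ supp w]) auto
  moreover have "penalized_obj S L U K \<le> penalized_obj S L U (K + outer (t *\<^sub>R v) v)"
    using K_min pd_mat_add_outer_self[OF K_pd] \<open>0 < t\<close> by simp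
  ultimately show "ln (1 + t * (v \<bullet> w)) \<le> t * (v \<bullet> (S *v v) + 2 * m * (v$i * v$j))"
    using penalized_obj_min_finite by (cases "penalized_obj S L U K") (auto simp: algebra_simps)
qed

lemma offdiag_slope_sqrt_bound:
  assumes ij: "i \<noteq> j" and "K$i$j \<noteq> 0"
    and slope: "\<And>x. 0 < x * K$i$j \<Longrightarrow> max (L i j * ereal x) (U i j * ereal x) = ereal (m * x)"
  shows "\<bar>S$i$j + m\<bar> < sqrt (S$i$i * S$j$j)"
proof -
  have S_ij: "S$j$i = S$i$j" using S_sym by (simp add: sym_mat_iff_entries)
  have "0 < S$i$i * a\<^sup>2 + 2 * (S$i$j + m) * a * b + S$j$j * b\<^sup>2" if "(a, b) \<noteq> (0, 0)" for a b
  proof -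
    define v where "v = a *\<^sub>R axis i 1 + b *\<^sub>R axis j (1::real)"
    obtain w where w: "K *v w = v" using pd_mat_solvable[OF K_pd] .
    have v_ij: "v$i = a" "v$j = b" using ij by (simp_all add: v_def axis_def)
    have "v \<noteq> 0" using that v_ij by auto
    have "0 < v \<bullet> w" by (rule pd_mat_inner_solution_pos[OF K_pd w \<open>v \<noteq> 0\<close>])
    also have "v \<bullet> w \<le> v \<bullet> (S *v v) + 2 * m * (v$i * v$j)"
      using assms w by (intro first_order_rank_one) (auto simp: v_def axis_def)
    also have "v \<bullet> (S *v v) = S$i$i * a\<^sup>2 + 2 * S$i$j * a * b + S$j$j * b\<^sup>2"
      using ij S_ij
      by (simp add: v_def matrix_vector_right_distrib matrix_vector_mult_scaleR
          matrix_vector_mult_basis inner_add_left inner_add_right inner_axis' column_def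
          power2_eq_square algebra_simps)
    finally show ?thesis unfolding v_ij by (simp add: algebra_simps)
  qed
  then have "(S$i$j + m)\<^sup>2 < S$i$i * S$j$j"
    by (intro quadratic_form_pos_imp_sq_less) auto
  then show ?thesis using real_sqrt_less_mono by fastforce
qed

lemma offdiag_nonzero_obtain_slope:
  assumes ij: "i \<noteq> j" and "K$i$j \<noteq> 0"
  obtains m where "\<bar>S$i$j + m\<bar> < sqrt (S$i$i * S$j$j)"
    and "K$i$j < 0 \<Longrightarrow> L i j = ereal m" and "0 < K$i$j \<Longrightarrow> U i j = ereal m"
proof (cases "K$i$j < 0")
  case True
  then have L_pen: "max (L i j * ereal x) (U i j * ereal x) = L i j * ereal x" if "0 < x * K$i$j" for x
    using that L_nonpos[OF ij] U_nonneg[OF ij] by (intro max_mult_ereal_neg) (auto simp: zero_less_mult_iff)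
  obtain l where l: "L i j = ereal l"
    using penalty_min_finite[OF ij] L_nonpos[OF ij] L_pen[of "K$i$j"] True
    by (cases "L i j") (auto simp: not_real_square_gt_zero)
  show ?thesis
    using that[of l] offdiag_slope_sqrt_bound[OF assms, of l] L_pen True unfolding l by auto
next
  case False
  then have "0 < K$i$j" using assms(2) by simp
  then have U_pen: "max (L i j * ereal x) (U i j * ereal x) = U i j * ereal x" if "0 < x * K$i$j" for x
    using that L_nonpos[OF ij] U_nonneg[OF ij] by (intro max_mult_ereal_pos) (auto simp: zero_less_mult_iff)
  obtain u where u: "U i j = ereal u"
    using penalty_min_finite[OF ij] U_nonneg[OF ij] U_pen[of "K$i$j"] \<open>0 < K$i$j\<close>
    by (cases "U i j") (auto simp: not_real_square_gt_zero)
  show ?thesis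
    using that[of u] offdiag_slope_sqrt_bound[OF assms, of u] U_pen False unfolding u by auto
qed

end

theorem corollary8p4:
  fixes S Khat :: "real^'n^'n"
    and L U :: "'n \<Rightarrow> 'n \<Rightarrow> ereal"
  assumes S_psd: "psd_mat S"
    and L_sym: "\<And>i j. L i j = L j i"
    and U_sym: "\<And>i j. U i j = U j i"
    and L_nonpos: "\<And>i j. i \<noteq> j \<Longrightarrow> L i j \<le> 0"
    and U_nonneg: "\<And>i j. i \<noteq> j \<Longrightarrow> U i j \<ge> 0"
    and L_diag: "\<And>i. L i i = 0"
    and U_diag: "\<And>i. U i i = 0"
    and Khat_pd: "pd_mat Khat"
    and Khat_opt: "\<And>K. pd_mat K \<Longrightarrow> penalized_obj S L U Khat \<le> penalized_obj S L U K"
    and ij: "i \<noteq> j"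
  shows "(L i j \<le> ereal (- S $ i $ j - sqrt (S $ i $ i * S $ j $ j)) \<longrightarrow> Khat $ i $ j \<ge> 0)
       \<and> (U i j \<ge> ereal (- S $ i $ j + sqrt (S $ i $ i * S $ j $ j)) \<longrightarrow> Khat $ i $ j \<le> 0)
       \<and> (L i j \<le> ereal (- S $ i $ j - sqrt (S $ i $ i * S $ j $ j)) \<and>
          U i j \<ge> ereal (- S $ i $ j + sqrt (S $ i $ i * S $ j $ j)) \<longrightarrow> Khat $ i $ j = 0)"
proof -
  interpret penalized_minimizer S Khat L U
    using S_psd L_sym U_sym L_nonpos U_nonneg Khat_pd Khat_opt by unfold_locales (auto simp: psd_mat_def)
  define s where "s = sqrt (S$i$i * S$j$j)"
  have L_case: "0 \<le> Khat$i$j" if "L i j \<le> ereal (- S$i$j - s)"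
  proof (rule ccontr)
    assume "\<not> 0 \<le> Khat$i$j"
    then obtain m where "\<bar>S$i$j + m\<bar> < s" "L i j = ereal m"
      using offdiag_nonzero_obtain_slope[OF ij] unfolding s_def by (metis linorder_not_le order.asym)
    then show False using that by simp
  qed
  have U_case: "Khat$i$j \<le> 0" if "ereal (- S$i$j + s) \<le> U i j"
  proof (rule ccontr)
    assume "\<not> Khat$i$j \<le> 0"
    then obtain m where "\<bar>S$i$j + m\<bar> < s" "U i j = ereal m"
      using offdiag_nonzero_obtain_slope[OF ij] unfolding s_def by (metis linorder_not_le order.asym)
    then show False using that by simp
  qed
  show ?thesis using L_case U_case unfolding s_def by auto
qed

end
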